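(* Let $(X,d)$ be a complete $\mathrm{CAT}(0)$-space and $\xi:[0,\ell)\to X$ a self-contracted curve. Then for every $\tau\in[0,\ell)$ and all $t_1,t_2\in(\tau,\ell)$ with $\xi(t_1)\ne\xi(\tau)$ and $\xi(t_2)\ne\xi(\tau)$, we have $\angle[\xi(t_1)\,\xi(\tau)\,\xi(t_2)]<\pi/2$.
   Context: A geodesic metric space $(X,d)$ is a $\mathrm{CAT}(0)$-space if for all $x,y,z\in X$ and every minimal geodesic $\gamma:[0,1]\to X$ from $y$ to $z$ (i.e. $d(\gamma(s),\gamma(t))=|t-s|d(y,z)$), $d^2(x,\gamma(s))\le(1-s)d^2(x,y)+sd^2(x,z)-(1-s)sd^2(y,z)$ for all $s\in[0,1]$; minimal geodesics are then unique, denoted $\gamma_{xy}$. The Euclidean comparison angle $\tilde\angle[yxz]\in[0,\pi]$ is defined by $\cos\tilde\angle[yxz]=\frac{d^2(x,y)+d^2(x,z)-d^2(y,z)}{2d(x,y)d(x,z)}$, and the angle is $\angle[yxz]:=\lim_{s,t\to0}\tilde\angle[\gamma_{xy}(s)\,x\,\gamma_{xz}(t)]$. A map $\xi:[0,\ell)\to X$ (not necessarily continuous) is self-contracted if $d(\xi(t_2),\xi(t_3))\le d(\xi(t_1),\xi(t_3))$ for all $0\le t_1\le t_2\le t_3<\ell$. *)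

theory Defs
  imports "HOL-Analysis.Analysis" "HOL-Library.Extended_Real"
begin

definition min_geodesic :: "(real \<Rightarrow> 'a::metric_space) \<Rightarrow> 'a \<Rightarrow> 'a \<Rightarrow> bool" where
  "min_geodesic \<gamma> y z \<longleftrightarrow> \<gamma> 0 = y \<and> \<gamma> 1 = z \<and>
     (\<forall>s\<in>{0..1}. \<forall>t\<in>{0..1}. dist (\<gamma> s) (\<gamma> t) = \<bar>t - s\<bar> * dist y z)"

definition geodesic_space :: "'a::metric_space itself \<Rightarrow> bool" where
  "geodesic_space _ \<longleftrightarrow> (\<forall>y z::'a. \<exists>\<gamma>. min_geodesic \<gamma> y z)"

definition CAT0 :: "'a::metric_space itself \<Rightarrow> bool" where
  "CAT0 T \<longleftrightarrow> geodesic_space T \<and>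
     (\<forall>x y z::'a. \<forall>\<gamma>. min_geodesic \<gamma> y z \<longrightarrow>
        (\<forall>s\<in>{0..1}. (dist x (\<gamma> s))\<^sup>2 \<le>
            (1 - s) * (dist x y)\<^sup>2 + s * (dist x z)\<^sup>2 - (1 - s) * s * (dist y z)\<^sup>2))"

text \<open>The (unique, in a CAT(0) space) minimal geodesic from x to y.\<close>
definition geod :: "'a::metric_space \<Rightarrow> 'a \<Rightarrow> real \<Rightarrow> 'a" where
  "geod x y s = (THE p. \<exists>\<gamma>. min_geodesic \<gamma> x y \<and> \<gamma> s = p)"

definition comp_angle :: "'a::metric_space \<Rightarrow> 'a \<Rightarrow> 'a \<Rightarrow> real" where
  "comp_angle y x z = arccos (((dist x y)\<^sup>2 + (dist x z)\<^sup>2 - (dist y z)\<^sup>2) / (2 * dist x y * dist x z))"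

definition geo_angle :: "'a::metric_space \<Rightarrow> 'a \<Rightarrow> 'a \<Rightarrow> real" where
  "geo_angle y x z = Lim (at (0,0) within ({0<..1} \<times> {0<..1}))
      (\<lambda>(s,t). comp_angle (geod x y s) x (geod x z t))"

definition self_contracted :: "ereal \<Rightarrow> (real \<Rightarrow> 'a::metric_space) \<Rightarrow> bool" where
  "self_contracted l \<xi> \<longleftrightarrow> (\<forall>t1 t2 t3. 0 \<le> t1 \<and> t1 \<le> t2 \<and> t2 \<le> t3 \<and> ereal t3 < l \<longrightarrow>
      dist (\<xi> t2) (\<xi> t3) \<le> dist (\<xi> t1) (\<xi> t3))"

end

theory Submission
  imports Defs
begin

text \<open>In a CAT(0) space the comparison cosine at \<open>x\<close> can only grow when the two
  other vertices slide towards \<open>x\<close> along geodesics, so the angle, a limit of comparison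
  angles, is at most the comparison angle of the whole triangle.  For a self-contracted
  curve the side \<open>\<xi> t\<^sub>1 \<xi> t\<^sub>2\<close> is never longer than both sides issuing
  from \<open>\<xi> \<tau>\<close>, so that comparison angle is acute.\<close>

definition comp_cos :: "'a::metric_space \<Rightarrow> 'a \<Rightarrow> 'a \<Rightarrow> real" where
  "comp_cos y x z = ((dist x y)\<^sup>2 + (dist x z)\<^sup>2 - (dist y z)\<^sup>2) / (2 * dist x y * dist x z)"

lemma comp_angle_eq_arccos: "comp_angle y x z = arccos (comp_cos y x z)"
  unfolding comp_angle_def comp_cos_def by simp

lemma comp_cos_commute: "comp_cos y x z = comp_cos z x y"
  unfolding comp_cos_def by (simp add: dist_commute mult.commute mult.left_commute add.commute)

lemma comp_cos_bounds:
  assumes "y \<noteq> x" "z \<noteq> x"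
  shows "-1 \<le> comp_cos y x z \<and> comp_cos y x z \<le> 1"
proof -
  define a b c where "a = dist x y" "b = dist x z" "c = dist y z"
  have pos: "2 * a * b > 0" using assms a_b_c_def by auto
  have "\<bar>a - b\<bar> \<le> c" "c \<le> a + b"
    using dist_triangle[of x y z] dist_triangle[of x z y] dist_triangle[of y z x]
    unfolding a_b_c_def by (auto simp: dist_commute)
  then have "(a - b)\<^sup>2 \<le> c\<^sup>2" "c\<^sup>2 \<le> (a + b)\<^sup>2"
    using power_mono[of "\<bar>a - b\<bar>" c 2] power_mono[of c "a + b" 2] a_b_c_def by auto
  then have "-(2 * a * b) \<le> a\<^sup>2 + b\<^sup>2 - c\<^sup>2" "a\<^sup>2 + b\<^sup>2 - c\<^sup>2 \<le> 2 * a * b"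
    unfolding power2_sum power2_diff by linarith+
  then show ?thesis
    using pos unfolding comp_cos_def a_b_c_def[symmetric] by (simp add: le_divide_eq divide_le_eq)
qed

lemma comp_cos_pos:
  assumes "y \<noteq> x" "z \<noteq> x" and "dist y z \<le> max (dist x y) (dist x z)"
  shows "comp_cos y x z > 0"
proof -
  have "(dist y z)\<^sup>2 \<le> (dist x y)\<^sup>2 \<or> (dist y z)\<^sup>2 \<le> (dist x z)\<^sup>2"
    using assms(3) by (auto simp: max_def intro: power_mono split: if_splits)
  moreover have "(dist x y)\<^sup>2 > 0" "(dist x z)\<^sup>2 > 0" using assms(1,2) by auto
  ultimately have "(dist x y)\<^sup>2 + (dist x z)\<^sup>2 - (dist y z)\<^sup>2 > 0"
    by linarith
  then show ?thesis unfolding comp_cos_def using assms(1,2) by simp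
qed

lemma comp_angle_less_pi_half:
  assumes "y \<noteq> x" "z \<noteq> x" and "comp_cos y x z > 0"
  shows "comp_angle y x z < pi / 2"
proof -
  have "arccos (comp_cos y x z) < arccos 0"
    using comp_cos_bounds[OF assms(1,2)] assms(3) by (intro arccos_less_arccos) auto
  then show ?thesis by (simp add: comp_angle_eq_arccos)
qed

lemma min_geodesic_dist:
  "min_geodesic \<gamma> y z \<Longrightarrow> s \<in> {0..1} \<Longrightarrow> t \<in> {0..1} \<Longrightarrow>
     dist (\<gamma> s) (\<gamma> t) = \<bar>t - s\<bar> * dist y z"
  unfolding min_geodesic_def by blast

lemma min_geodesic_start: "min_geodesic \<gamma> y z \<Longrightarrow> \<gamma> 0 = y"
  unfolding min_geodesic_def by blast

lemma min_geodesic_end: "min_geodesic \<gamma> y z \<Longrightarrow> \<gamma> 1 = z"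
  unfolding min_geodesic_def by blast

lemma min_geodesic_dist_start:
  "min_geodesic \<gamma> y z \<Longrightarrow> s \<in> {0..1} \<Longrightarrow> dist y (\<gamma> s) = s * dist y z"
  using min_geodesic_dist[of \<gamma> y z 0 s] min_geodesic_start[of \<gamma> y z] by auto

lemma min_geodesic_dist_end:
  "min_geodesic \<gamma> y z \<Longrightarrow> s \<in> {0..1} \<Longrightarrow> dist z (\<gamma> s) = (1 - s) * dist y z"
  using min_geodesic_dist[of \<gamma> y z 1 s] min_geodesic_end[of \<gamma> y z] by (auto simp: dist_commute)

lemma min_geodesic_restrict:
  assumes g: "min_geodesic \<gamma> x y" and r: "0 < r" "r \<le> 1"
  shows "min_geodesic (\<lambda>u. \<gamma> (r * u)) x (\<gamma> r)"
  unfolding min_geodesic_def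
proof (intro conjI ballI)
  show "\<gamma> (r * 0) = x" using min_geodesic_start[OF g] by simp
  show "\<gamma> (r * 1) = \<gamma> r" by simp
  fix u v :: real assume "u \<in> {0..1}" "v \<in> {0..1}"
  then have "r * u \<in> {0..1}" "r * v \<in> {0..1}" using r by (auto simp: mult_le_one)
  then have "dist (\<gamma> (r * u)) (\<gamma> (r * v)) = \<bar>r * v - r * u\<bar> * dist x y"
    by (rule min_geodesic_dist[OF g])
  also have "\<dots> = \<bar>v - u\<bar> * (r * dist x y)"
    using r by (simp add: abs_mult right_diff_distrib[symmetric])
  also have "r * dist x y = dist x (\<gamma> r)"
    using min_geodesic_dist_start[OF g, of r] r by simp
  finally show "dist (\<gamma> (r * u)) (\<gamma> (r * v)) = \<bar>v - u\<bar> * dist x (\<gamma> r)" .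
qed

lemma CAT0_comparison:
  assumes "CAT0 TYPE('a::metric_space)" "min_geodesic \<gamma> y z" "s \<in> {0..1}"
  shows "(dist (w::'a) (\<gamma> s))\<^sup>2 \<le> (1 - s) * (dist w y)\<^sup>2 + s * (dist w z)\<^sup>2 - (1 - s) * s * (dist y z)\<^sup>2"
  using assms unfolding CAT0_def by blast

lemma CAT0_geodesic_exists:
  assumes "CAT0 TYPE('a::metric_space)"
  obtains \<gamma> where "min_geodesic \<gamma> (y::'a) z"
  using assms unfolding CAT0_def geodesic_space_def by blast

lemma CAT0_geodesic_unique:
  assumes c: "CAT0 TYPE('a::metric_space)" and g: "min_geodesic \<gamma> (x::'a) y"
    and g': "min_geodesic \<gamma>' x y" and s: "s \<in> {0..1}"
  shows "\<gamma>' s = \<gamma> s"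
proof -
  have "(dist (\<gamma>' s) (\<gamma> s))\<^sup>2 \<le>
      (1 - s) * (dist (\<gamma>' s) x)\<^sup>2 + s * (dist (\<gamma>' s) y)\<^sup>2 - (1 - s) * s * (dist x y)\<^sup>2"
    using CAT0_comparison[OF c g s] .
  also have "\<dots> = (1 - s) * (s * dist x y)\<^sup>2 + s * ((1 - s) * dist x y)\<^sup>2 - (1 - s) * s * (dist x y)\<^sup>2"
    using min_geodesic_dist_start[OF g' s] min_geodesic_dist_end[OF g' s] by (simp add: dist_commute)
  also have "\<dots> = 0" by (simp add: power2_eq_square algebra_simps)
  finally show ?thesis by simp
qed

lemma geod_eq_min_geodesic:
  assumes c: "CAT0 TYPE('a::metric_space)" and g: "min_geodesic \<gamma> (x::'a) y" and s: "s \<in> {0..1}"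
  shows "geod x y s = \<gamma> s"
  unfolding geod_def
proof (rule the_equality)
  show "\<exists>\<gamma>'. min_geodesic \<gamma>' x y \<and> \<gamma>' s = \<gamma> s" using g by blast
next
  fix p assume "\<exists>\<gamma>'. min_geodesic \<gamma>' x y \<and> \<gamma>' s = p"
  then show "p = \<gamma> s" using CAT0_geodesic_unique[OF c g _ s] by blast
qed

lemma CAT0_comp_cos_le_geodesic_point:
  assumes c: "CAT0 TYPE('a::metric_space)" and g: "min_geodesic \<gamma> (x::'a) y"
    and "y \<noteq> x" "w \<noteq> x" and s: "0 < s" "s \<le> 1"
  shows "comp_cos y x w \<le> comp_cos (\<gamma> s) x w"
proof -
  define a b c where "a = dist x y" "b = dist x w" "c = dist y w"
  have ab: "a > 0" "b > 0" using assms a_b_c_def by auto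
  then have pos: "2 * (s * a) * b > 0" using s by simp
  have s01: "s \<in> {0..1}" using s by simp
  have dist_x: "dist x (\<gamma> s) = s * a" using min_geodesic_dist_start[OF g s01] a_b_c_def by simp
  have "(dist w (\<gamma> s))\<^sup>2 \<le> (1 - s) * b\<^sup>2 + s * c\<^sup>2 - (1 - s) * s * a\<^sup>2"
    using CAT0_comparison[OF c g s01, of w] a_b_c_def by (simp add: dist_commute)
  then have num: "s * (a\<^sup>2 + b\<^sup>2 - c\<^sup>2) \<le> (s * a)\<^sup>2 + b\<^sup>2 - (dist (\<gamma> s) w)\<^sup>2"
    by (simp add: dist_commute power2_eq_square algebra_simps)
  have "comp_cos y x w = s * (a\<^sup>2 + b\<^sup>2 - c\<^sup>2) / (2 * (s * a) * b)"
    unfolding comp_cos_def a_b_c_def[symmetric] using s ab by (simp add: field_simps)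
  also have "\<dots> \<le> ((s * a)\<^sup>2 + b\<^sup>2 - (dist (\<gamma> s) w)\<^sup>2) / (2 * (s * a) * b)"
    by (rule divide_right_mono[OF num]) (use pos in simp)
  also have "\<dots> = comp_cos (\<gamma> s) x w" unfolding comp_cos_def dist_x a_b_c_def by simp
  finally show ?thesis .
qed

lemma CAT0_comp_cos_antimono_geodesic:
  assumes c: "CAT0 TYPE('a::metric_space)" and g: "min_geodesic \<gamma> (x::'a) y"
    and xy: "y \<noteq> x" and wx: "w \<noteq> x" and s: "0 < s'" "s' \<le> s" "s \<le> 1"
  shows "comp_cos (\<gamma> s) x w \<le> comp_cos (\<gamma> s') x w"
proof -
  have g': "min_geodesic (\<lambda>u. \<gamma> (s * u)) x (\<gamma> s)"
    using min_geodesic_restrict[OF g] s by simp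
  have "dist x (\<gamma> s) = s * dist x y" using min_geodesic_dist_start[OF g, of s] s by simp
  then have "\<gamma> s \<noteq> x" using xy s by auto
  from CAT0_comp_cos_le_geodesic_point[OF c g' this wx, of "s' / s"] s show ?thesis by simp
qed

lemma tendsto_Sup_antimono_at_origin:
  fixes Q :: "real \<times> real \<Rightarrow> real"
  defines "S \<equiv> {0<..1} \<times> {0<..1}"
  assumes bdd: "bdd_above (Q ` S)"
    and antimono: "\<And>p p'. p \<in> S \<Longrightarrow> p' \<in> S \<Longrightarrow> fst p' \<le> fst p \<Longrightarrow> snd p' \<le> snd p \<Longrightarrow> Q p \<le> Q p'"
  shows "(Q \<longlongrightarrow> Sup (Q ` S)) (at (0, 0) within S)"
  unfolding order_tendsto_iff
proof (intro conjI allI impI)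
  fix u assume "Sup (Q ` S) < u"
  then show "eventually (\<lambda>p. Q p < u) (at (0, 0) within S)"
    unfolding eventually_at using cSup_upper[OF _ bdd] by (intro exI[of _ 1]) force
next
  fix l assume "l < Sup (Q ` S)"
  moreover have "Q ` S \<noteq> {}" unfolding S_def by auto
  ultimately obtain p0 where p0: "p0 \<in> S" "l < Q p0" using less_cSup_iff[OF _ bdd] by force
  have d: "min (fst p0) (snd p0) > 0" using p0 unfolding S_def by auto
  show "eventually (\<lambda>p. l < Q p) (at (0, 0) within S)"
    unfolding eventually_at
  proof (intro exI[of _ "min (fst p0) (snd p0)"] conjI d ballI impI)
    fix p assume p: "p \<in> S" "p \<noteq> (0, 0) \<and> dist p (0, 0) < min (fst p0) (snd p0)"
    then have "fst p \<le> fst p0" "snd p \<le> snd p0"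
      using dist_fst_le[of p "(0, 0)"] dist_snd_le[of p "(0, 0)"]
      unfolding S_def by (auto simp: dist_real_def mem_Times_iff)
    then show "l < Q p" using antimono[OF p0(1) p(1)] p0(2) by simp
  qed
qed

lemma trivial_limit_at_origin_within_square:
  "\<not> trivial_limit (at (0::real, 0::real) within {0<..1} \<times> {0<..1})"
proof -
  have "(0, 0) \<in> closure ({0<..1::real} \<times> {0<..1::real})"
    "{0<..1::real} \<times> {0<..1::real} - {(0, 0)} = {0<..1} \<times> {0<..1}"
    unfolding closure_Times by auto
  then show ?thesis using not_trivial_limit_within by metis
qed

lemma CAT0_geo_angle_le_comp_angle:
  assumes c: "CAT0 TYPE('a::metric_space)" and xy: "y \<noteq> (x::'a)" and xz: "z \<noteq> x"
  shows "geo_angle y x z \<le> comp_angle y x z"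
proof -
  obtain G1 G2 where g1: "min_geodesic G1 x y" and g2: "min_geodesic G2 x z"
    using CAT0_geodesic_exists[OF c] by metis
  define S :: "(real \<times> real) set" where "S = {0<..1} \<times> {0<..1}"
  define Q where "Q p = comp_cos (geod x y (fst p)) x (geod x z (snd p))" for p :: "real \<times> real"
  have Q_G: "Q p = comp_cos (G1 (fst p)) x (G2 (snd p))" if "p \<in> S" for p
    using that geod_eq_min_geodesic[OF c g1, of "fst p"] geod_eq_min_geodesic[OF c g2, of "snd p"]
    unfolding Q_def S_def by auto
  have G1_ne: "G1 s \<noteq> x" and G2_ne: "G2 s \<noteq> x" if "0 < s" "s \<le> 1" for s
    using min_geodesic_dist_start[OF g1, of s] min_geodesic_dist_start[OF g2, of s] that xy xz
    by auto
  have Q_bounds: "-1 \<le> Q p \<and> Q p \<le> 1" if "p \<in> S" for p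
    using Q_G[OF that] comp_cos_bounds[OF G1_ne G2_ne, of "fst p" "snd p"] that
    unfolding S_def by (auto simp: mem_Times_iff)
  have Q_antimono: "Q p \<le> Q p'"
    if "p \<in> S" "p' \<in> S" "fst p' \<le> fst p" "snd p' \<le> snd p" for p p'
  proof -
    obtain s t s' t' where p: "p = (s, t)" "p' = (s', t')" by (cases p, cases p')
    have r: "0 < s'" "s' \<le> s" "s \<le> 1" "0 < t'" "t' \<le> t" "t \<le> 1"
      using that p unfolding S_def by auto
    have "comp_cos (G1 s) x (G2 t) \<le> comp_cos (G1 s') x (G2 t)"
      using CAT0_comp_cos_antimono_geodesic[OF c g1 xy G2_ne] r by auto
    also have "\<dots> \<le> comp_cos (G1 s') x (G2 t')"
      using CAT0_comp_cos_antimono_geodesic[OF c g2 xz G1_ne, of s' t' t] r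
      by (auto simp: comp_cos_commute[of _ x])
    finally show ?thesis using Q_G[OF that(1)] Q_G[OF that(2)] p by simp
  qed
  define L where "L = Sup (Q ` S)"
  have S11: "(1, 1) \<in> S" unfolding S_def by auto
  have bdd: "bdd_above (Q ` S)" unfolding bdd_above_def using Q_bounds by blast
  have Q11: "Q (1, 1) = comp_cos y x z"
    using Q_G[OF S11] min_geodesic_end[OF g1] min_geodesic_end[OF g2] by simp
  have L_ge: "comp_cos y x z \<le> L" using cSup_upper[OF _ bdd] S11 Q11 unfolding L_def by force
  have L_le: "L \<le> 1" unfolding L_def using S11 Q_bounds by (auto intro!: cSup_least)
  have "(Q \<longlongrightarrow> L) (at (0, 0) within S)"
    unfolding L_def S_def
    by (rule tendsto_Sup_antimono_at_origin) (use bdd Q_antimono in \<open>auto simp: S_def\<close>)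
  moreover have "eventually (\<lambda>p. Q p \<in> {-1..1}) (at (0, 0) within S)"
    unfolding eventually_at using Q_bounds by (intro exI[of _ 1]) force
  ultimately have "((\<lambda>p. arccos (Q p)) \<longlongrightarrow> arccos L) (at (0, 0) within S)"
    using L_ge L_le Q_bounds[OF S11] Q11
    by (intro continuous_on_tendsto_compose[OF continuous_on_arccos']) auto
  moreover have "(\<lambda>(s, t). comp_angle (geod x y s) x (geod x z t)) = (\<lambda>p. arccos (Q p))"
    by (auto simp: Q_def comp_angle_eq_arccos)
  ultimately have "geo_angle y x z = arccos L"
    using trivial_limit_at_origin_within_square
    unfolding geo_angle_def S_def[symmetric] by (simp add: tendsto_Lim)
  also have "\<dots> \<le> comp_angle y x z"
    unfolding comp_angle_eq_arccos
    by (rule arccos_le_arccos) (use L_ge L_le Q_bounds[OF S11] Q11 in auto)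
  finally show ?thesis .
qed

lemma self_contracted_dist_le_max:
  assumes "self_contracted l \<xi>" "0 \<le> \<tau>" "\<tau> \<le> t1" "\<tau> \<le> t2" "ereal t1 < l" "ereal t2 < l"
  shows "dist (\<xi> t1) (\<xi> t2) \<le> max (dist (\<xi> \<tau>) (\<xi> t1)) (dist (\<xi> \<tau>) (\<xi> t2))"
proof (cases "t1 \<le> t2")
  case True
  then have "dist (\<xi> t1) (\<xi> t2) \<le> dist (\<xi> \<tau>) (\<xi> t2)"
    using assms unfolding self_contracted_def by auto
  then show ?thesis by simp
next
  case False
  then have "dist (\<xi> t2) (\<xi> t1) \<le> dist (\<xi> \<tau>) (\<xi> t1)"
    using assms unfolding self_contracted_def by auto
  then show ?thesis by (simp add: dist_commute)
qed

theorem mainTheorem13: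
  fixes \<xi> :: "real \<Rightarrow> 'a::complete_space" and l :: ereal and \<tau> t1 t2 :: real
  assumes "CAT0 TYPE('a)"
    and "l > 0"
    and "self_contracted l \<xi>"
    and "0 \<le> \<tau>" and "ereal \<tau> < l"
    and "\<tau> < t1" and "ereal t1 < l" and "\<tau> < t2" and "ereal t2 < l"
    and "\<xi> t1 \<noteq> \<xi> \<tau>" and "\<xi> t2 \<noteq> \<xi> \<tau>"
  shows "geo_angle (\<xi> t1) (\<xi> \<tau>) (\<xi> t2) < pi / 2"
proof -
  have "dist (\<xi> t1) (\<xi> t2) \<le> max (dist (\<xi> \<tau>) (\<xi> t1)) (dist (\<xi> \<tau>) (\<xi> t2))"
    using self_contracted_dist_le_max assms(3,4,6-9) by fastforce
  then have "comp_cos (\<xi> t1) (\<xi> \<tau>) (\<xi> t2) > 0"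
    using comp_cos_pos assms(10,11) by blast
  then have "comp_angle (\<xi> t1) (\<xi> \<tau>) (\<xi> t2) < pi / 2"
    using comp_angle_less_pi_half assms(10,11) by blast
  moreover have "geo_angle (\<xi> t1) (\<xi> \<tau>) (\<xi> t2) \<le> comp_angle (\<xi> t1) (\<xi> \<tau>) (\<xi> t2)"
    using CAT0_geo_angle_le_comp_angle assms(1,10,11) by blast
  ultimately show ?thesis by simp
qed

end
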